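(* Let $[\mu]\in\mathbb PV_n$ be a critical point of $F_n$ of type $\alpha=(k_1<k_2<\dots<k_r;d_1,\dots,d_r)$. Then (i) if $\alpha=(0;n)$, then $F_n([\mu])=\frac4n$; (ii) if $\alpha\neq(0;n)$, then $F_n([\mu])=4\left(n-\dfrac{(k_1d_1+\dots+k_rd_r)^2}{k_1^2d_1+\dots+k_r^2d_r}\right)^{-1}$.
   Context: $V_n$ is the space of bilinear maps $\mu:\mathbb C^n\times\mathbb C^n\to\mathbb C^n$ with standard Hermitian structures. $L^\mu_XY=\mu(X,Y)$, $R^\mu_XY=\mu(Y,X)$, $\mathrm M_\mu=2\sum_i L^\mu_{X_i}(L^\mu_{X_i})^*-2\sum_i (L^\mu_{X_i})^*L^\mu_{X_i}-2\sum_i (R^\mu_{X_i})^*R^\mu_{X_i}$ ($\{X_i\}$ orthonormal), $F_n([\mu])=\operatorname{tr}\mathrm M_\mu^2/\|\mu\|^4$. $[\mu]$ is a critical point of $F_n$ iff $\mathrm M_\mu=c_\mu I+D_\mu$ with $c_\mu\in\mathbb R$ and $D_\mu$ a derivation of $\mu$. For such a critical point there is $c>0$ such that the eigenvalues of $cD_\mu$ are integers with no common divisor $>1$; if $k_1<\dots<k_r$ are the distinct eigenvalues of $cD_\mu$ with multiplicities $d_1,\dots,d_r$, the data $(k_1<\dots<k_r;d_1,\dots,d_r)$ is called the type of $[\mu]$. Type $(0;n)$ means $D_\mu=0$. *)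

theory Defs
  imports "Jordan_Normal_Form.Char_Poly"
begin

text \<open>An element of V_n is represented by its structure constants w.r.t. the standard
 orthonormal basis e_0,...,e_(n-1) of C^n:
 mu(e_i, e_j) = sum_k (mu i j k) e_k   (only indices < n are relevant).\<close>

type_synonym bilin = "nat \<Rightarrow> nat \<Rightarrow> nat \<Rightarrow> complex"

definition bapp :: "nat \<Rightarrow> bilin \<Rightarrow> complex vec \<Rightarrow> complex vec \<Rightarrow> complex vec" where
  "bapp n \<mu> x y = vec n (\<lambda>k. \<Sum>i<n. \<Sum>j<n. x $ i * y $ j * \<mu> i j k)"

definition adj :: "complex mat \<Rightarrow> complex mat" where
  "adj A = mat (dim_col A) (dim_row A) (\<lambda>(i,j). cnj (A $$ (j,i)))"

definition tr :: "complex mat \<Rightarrow> complex" where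
  "tr A = (\<Sum>i<dim_row A. A $$ (i,i))"

text \<open>Matrices of L_{e_i} and R_{e_i}: column j is mu(e_i,e_j), resp. mu(e_j,e_i).\<close>
definition Lmat :: "nat \<Rightarrow> bilin \<Rightarrow> nat \<Rightarrow> complex mat" where
  "Lmat n \<mu> i = mat n n (\<lambda>(k,j). \<mu> i j k)"

definition Rmat :: "nat \<Rightarrow> bilin \<Rightarrow> nat \<Rightarrow> complex mat" where
  "Rmat n \<mu> i = mat n n (\<lambda>(k,j). \<mu> j i k)"

definition msum :: "nat \<Rightarrow> (nat \<Rightarrow> complex mat) \<Rightarrow> complex mat" where
  "msum n f = mat n n (\<lambda>(a,b). \<Sum>i<n. f i $$ (a,b))"

definition Mmu :: "nat \<Rightarrow> bilin \<Rightarrow> complex mat" where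
  "Mmu n \<mu> =
     2 \<cdot>\<^sub>m msum n (\<lambda>i. Lmat n \<mu> i * adj (Lmat n \<mu> i))
   - 2 \<cdot>\<^sub>m msum n (\<lambda>i. adj (Lmat n \<mu> i) * Lmat n \<mu> i)
   - 2 \<cdot>\<^sub>m msum n (\<lambda>i. adj (Rmat n \<mu> i) * Rmat n \<mu> i)"

definition normsq :: "nat \<Rightarrow> bilin \<Rightarrow> real" where
  "normsq n \<mu> = (\<Sum>i<n. \<Sum>j<n. \<Sum>k<n. (cmod (\<mu> i j k))\<^sup>2)"

text \<open>F_n([mu]) = tr(M_mu^2)/||mu||^4 (tr M_mu^2 is real since M_mu is Hermitian).\<close>
definition Fn :: "nat \<Rightarrow> bilin \<Rightarrow> real" where
  "Fn n \<mu> = Re (tr (Mmu n \<mu> * Mmu n \<mu>)) / (normsq n \<mu>)\<^sup>2"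

definition is_derivation :: "nat \<Rightarrow> bilin \<Rightarrow> complex mat \<Rightarrow> bool" where
  "is_derivation n \<mu> D \<longleftrightarrow> D \<in> carrier_mat n n \<and>
     (\<forall>x\<in>carrier_vec n. \<forall>y\<in>carrier_vec n.
        D *\<^sub>v bapp n \<mu> x y = bapp n \<mu> (D *\<^sub>v x) y + bapp n \<mu> x (D *\<^sub>v y))"

text \<open>Critical point of F_n on PV_n (characterization recalled in the paper):
  mu nonzero and M_mu = c I + D with c real and D a derivation of mu.\<close>
definition critical_pt :: "nat \<Rightarrow> bilin \<Rightarrow> bool" where
  "critical_pt n \<mu> \<longleftrightarrow> normsq n \<mu> \<noteq> 0 \<and>
     (\<exists>c::real. \<exists>D. is_derivation n \<mu> D \<and> Mmu n \<mu> = complex_of_real c \<cdot>\<^sub>m 1\<^sub>m n + D)"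

definition eigen_data :: "complex mat \<Rightarrow> int list \<Rightarrow> nat list \<Rightarrow> bool" where
  "eigen_data A ks ds \<longleftrightarrow> length ks = length ds \<and> sorted_wrt (<) ks \<and> (\<forall>d\<in>set ds. d > 0) \<and>
     char_poly A = (\<Prod>i<length ks. [:- of_int (ks ! i), 1:] ^ (ds ! i))"

definition has_type :: "nat \<Rightarrow> bilin \<Rightarrow> int list \<Rightarrow> nat list \<Rightarrow> bool" where
  "has_type n \<mu> ks ds \<longleftrightarrow> normsq n \<mu> \<noteq> 0 \<and>
     (\<exists>c::real. \<exists>D. is_derivation n \<mu> D \<and> Mmu n \<mu> = complex_of_real c \<cdot>\<^sub>m 1\<^sub>m n + D \<and>
        (if D = 0\<^sub>m n n then ks = [0] \<and> ds = [n]
         else (\<exists>s::real. s > 0 \<and> eigen_data (complex_of_real s \<cdot>\<^sub>m D) ks ds \<and> Gcd (set ks) = 1)))"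

end

theory Submission
  imports Defs "Jordan_Normal_Form.Schur_Decomposition"
begin

text \<open>Two trace identities for the moment map carry the proof: \<open>tr M\<^sub>\<mu> = -2\<parallel>\<mu>\<parallel>\<^sup>2\<close>,
  and \<open>tr (M\<^sub>\<mu> D) = 0\<close> for every derivation \<open>D\<close> of \<open>\<mu>\<close>, because in coordinates
  \<open>tr (M\<^sub>\<mu> D)\<close> pairs \<open>\<mu>\<close> with \<open>D \<circ> \<mu> - \<mu>(D\<cdot>,\<cdot>) - \<mu>(\<cdot>,D\<cdot>)\<close>.
  At a critical point \<open>M\<^sub>\<mu> = cI + D\<close> they give \<open>tr M\<^sub>\<mu>\<^sup>2 = c tr M\<^sub>\<mu> = -2c\<parallel>\<mu>\<parallel>\<^sup>2\<close>, so
  \<open>F\<^sub>n = -2c/\<parallel>\<mu>\<parallel>\<^sup>2\<close>, together with the linear system \<open>cn + tr D = -2\<parallel>\<mu>\<parallel>\<^sup>2\<close>,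
  \<open>c tr D + tr D\<^sup>2 = 0\<close> for \<open>c\<close>. The traces of \<open>D\<close> and \<open>D\<^sup>2\<close> are read off the eigenvalues
  of the type via a Schur triangularisation.\<close>

lemma tr_mult: assumes "A \<in> carrier_mat n n" "B \<in> carrier_mat n n"
  shows "tr (A * B) = (\<Sum>a<n. \<Sum>b<n. A $$ (a,b) * B $$ (b,a))"
  using assms unfolding tr_def by (auto simp: scalar_prod_def intro!: sum.cong)

lemma tr_mult_comm: assumes "A \<in> carrier_mat n n" "B \<in> carrier_mat n n"
  shows "tr (A * B) = tr (B * A)"
  unfolding tr_mult[OF assms] tr_mult[OF assms(2,1)]
  by (subst sum.swap) (simp add: mult.commute)

lemma tr_add: "A \<in> carrier_mat n n \<Longrightarrow> B \<in> carrier_mat n n \<Longrightarrow> tr (A + B) = tr A + tr B"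
  unfolding tr_def by (simp add: sum.distrib)

lemma tr_smult: "A \<in> carrier_mat n n \<Longrightarrow> tr (k \<cdot>\<^sub>m A) = k * tr A"
  unfolding tr_def by (simp add: sum_distrib_left)

lemma tr_one: "tr (1\<^sub>m n) = of_nat n"
  unfolding tr_def by simp

lemma tr_similar_mat_wit: assumes "similar_mat_wit A B P Q"
  shows "tr A = tr B"
proof -
  define n where "n = dim_row A"
  from similar_mat_witD[OF n_def assms] have AB: "A = P * B * Q" and QP: "Q * P = 1\<^sub>m n"
    and B: "B \<in> carrier_mat n n" and P: "P \<in> carrier_mat n n" and Q: "Q \<in> carrier_mat n n"
    by blast+
  have "tr A = tr (Q * (P * B))"
    unfolding AB using B P Q by (intro tr_mult_comm) auto
  also have "Q * (P * B) = B"
    using assoc_mult_mat[OF Q P B] QP B by simp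
  finally show ?thesis .
qed

lemma tr_square_similar_mat_wit: assumes "similar_mat_wit A B P Q"
  shows "tr (A * A) = tr (B * B)"
proof -
  define n where "n = dim_row A"
  from similar_mat_witD[OF n_def assms] have "A \<in> carrier_mat n n" "B \<in> carrier_mat n n"
    by blast+
  then have "A ^\<^sub>m 2 = A * A" "B ^\<^sub>m 2 = B * B"
    by (simp_all add: numeral_2_eq_2 del: One_nat_def)
  with tr_similar_mat_wit[OF similar_mat_wit_pow[OF assms, of 2]] show ?thesis
    by simp
qed

lemma tr_square_upper_triangular:
  assumes B: "B \<in> carrier_mat n n" and ut: "upper_triangular B"
  shows "tr (B * B) = (\<Sum>i<n. (B $$ (i,i))\<^sup>2)"
proof -
  have "B $$ (i,j) * B $$ (j,i) = (if j = i then (B $$ (i,i))\<^sup>2 else 0)" if "i < n" "j < n" for i j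
    using upper_triangularD[OF ut] B that
    by (cases i j rule: linorder_cases) (simp_all add: power2_eq_square)
  then have "tr (B * B) = (\<Sum>i<n. \<Sum>j<n. if j = i then (B $$ (i,i))\<^sup>2 else 0)"
    unfolding tr_mult[OF B B] by (intro sum.cong refl) auto
  then show ?thesis
    by simp
qed

lemma tr_char_poly_linear_factors:
  assumes A: "(A :: complex mat) \<in> carrier_mat n n" and cp: "char_poly A = (\<Prod>e\<leftarrow>es. [:- e, 1:])"
  shows "tr A = sum_list es" "tr (A * A) = sum_list (map (\<lambda>e. e\<^sup>2) es)"
proof -
  obtain B P Q where "schur_decomposition A es = (B,P,Q)"
    by (cases "schur_decomposition A es")
  from schur_decomposition[OF A cp this] have sim: "similar_mat_wit A B P Q"
    and ut: "upper_triangular B" and diag: "diag_mat B = es" by blast+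
  have B: "B \<in> carrier_mat n n"
    using similar_mat_witD2[OF A sim] by blast
  have diag_sum: "sum_list (map f es) = (\<Sum>i<n. f (B $$ (i,i)))" for f :: "complex \<Rightarrow> complex"
    using B unfolding diag[symmetric] diag_mat_def
    by (simp add: sum_list_sum_nth lessThan_atLeast0)
  show "tr A = sum_list es"
    using tr_similar_mat_wit[OF sim] diag_sum[of "\<lambda>e. e"] B by (simp add: tr_def)
  show "tr (A * A) = sum_list (map (\<lambda>e. e\<^sup>2) es)"
    using tr_square_similar_mat_wit[OF sim] tr_square_upper_triangular[OF B ut] diag_sum
    by simp
qed

lemma prod_linear_factor_powers_as_list:
  fixes r :: nat
  shows "\<exists>es. (\<Prod>i<r. [:- f i, 1:] ^ g i) = (\<Prod>e\<leftarrow>es. [:- e, 1:])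
     \<and> sum_list es = (\<Sum>i<r. f i * of_nat (g i))
     \<and> sum_list (map (\<lambda>e. e\<^sup>2) es) = (\<Sum>i<r. (f i)\<^sup>2 * of_nat (g i) :: 'a :: comm_ring_1)"
proof (induction r)
  case 0
  show ?case by (intro exI[of _ "[]"]) simp
next
  case (Suc r)
  then obtain es where "(\<Prod>i<r. [:- f i, 1:] ^ g i) = (\<Prod>e\<leftarrow>es. [:- e, 1:])"
    "sum_list es = (\<Sum>i<r. f i * of_nat (g i))"
    "sum_list (map (\<lambda>e. e\<^sup>2) es) = (\<Sum>i<r. (f i)\<^sup>2 * of_nat (g i))"
    by blast
  then show ?case
    by (intro exI[of _ "es @ replicate (g r) (f r)"])
      (simp add: prod_list_replicate sum_list_replicate mult.commute)
qed

lemma tr_char_poly_factor_powers: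
  fixes f :: "nat \<Rightarrow> complex" and g :: "nat \<Rightarrow> nat"
  assumes A: "(A :: complex mat) \<in> carrier_mat n n"
    and cp: "char_poly A = (\<Prod>i<r. [:- f i, 1:] ^ g i)"
  shows "tr A = (\<Sum>i<r. f i * of_nat (g i))" "tr (A * A) = (\<Sum>i<r. (f i)\<^sup>2 * of_nat (g i))"
  using prod_linear_factor_powers_as_list[of f g r] tr_char_poly_linear_factors[OF A] cp
  by auto

text \<open>In structure constants: \<open>bilin_inner\<close> is the Hermitian product of \<open>V\<^sub>n\<close>, and
  \<open>comp_bilin n D \<mu>\<close>, \<open>bilin_comp1 n \<mu> D\<close>, \<open>bilin_comp2 n \<mu> D\<close> are the bilinear maps
  \<open>D \<circ> \<mu>\<close>, \<open>\<mu>(D\<cdot>, \<cdot>)\<close> and \<open>\<mu>(\<cdot>, D\<cdot>)\<close>.\<close>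

definition bilin_inner :: "nat \<Rightarrow> bilin \<Rightarrow> bilin \<Rightarrow> complex" where
  "bilin_inner n \<mu> \<nu> = (\<Sum>i<n. \<Sum>j<n. \<Sum>k<n. cnj (\<mu> i j k) * \<nu> i j k)"

definition comp_bilin :: "nat \<Rightarrow> complex mat \<Rightarrow> bilin \<Rightarrow> bilin" where
  "comp_bilin n D \<mu> = (\<lambda>i j k. \<Sum>l<n. D $$ (k,l) * \<mu> i j l)"

definition bilin_comp1 :: "nat \<Rightarrow> bilin \<Rightarrow> complex mat \<Rightarrow> bilin" where
  "bilin_comp1 n \<mu> D = (\<lambda>i j k. \<Sum>l<n. D $$ (l,i) * \<mu> l j k)"

definition bilin_comp2 :: "nat \<Rightarrow> bilin \<Rightarrow> complex mat \<Rightarrow> bilin" where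
  "bilin_comp2 n \<mu> D = (\<lambda>i j k. \<Sum>l<n. D $$ (l,j) * \<mu> i l k)"

lemma sum_unit_vec_mult:
  assumes "i < n"
  shows "(\<Sum>a<n. unit_vec n i $ a * f a) = (f i :: 'a :: semiring_1)"
proof -
  have "(\<Sum>a<n. unit_vec n i $ a * f a) = (\<Sum>a<n. if a = i then f a else 0)"
    using assms by (intro sum.cong) auto
  then show ?thesis
    using assms by simp
qed

lemma mult_mat_vec_unit_vec_index:
  assumes "D \<in> carrier_mat n n" "a < n" "i < n"
  shows "(D *\<^sub>v unit_vec n i) $ a = (D $$ (a,i) :: 'a :: semiring_1)"
proof -
  have "(D *\<^sub>v unit_vec n i) $ a = row D a \<bullet> unit_vec n i"
    using assms by simp
  also have "\<dots> = D $$ (a,i)"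
    using assms by (simp only: scalar_prod_right_unit) simp
  finally show ?thesis .
qed

lemma dim_bapp [simp]: "dim_vec (bapp n \<mu> x y) = n"
  unfolding bapp_def by simp

lemma bapp_index:
  "k < n \<Longrightarrow> bapp n \<mu> x y $ k = (\<Sum>a<n. x $ a * (\<Sum>b<n. y $ b * \<mu> a b k))"
  unfolding bapp_def by (simp add: sum_distrib_left mult.assoc)

lemma bapp_unit_vecs:
  assumes "i < n" "j < n"
  shows "bapp n \<mu> (unit_vec n i) (unit_vec n j) = vec n (\<mu> i j)"
  using assms by (intro eq_vecI) (simp_all add: bapp_index sum_unit_vec_mult del: index_unit_vec)

lemma bapp_unit_vec_left:
  "i < n \<Longrightarrow> k < n \<Longrightarrow> bapp n \<mu> (unit_vec n i) y $ k = (\<Sum>b<n. y $ b * \<mu> i b k)"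
  by (simp add: bapp_index sum_unit_vec_mult del: index_unit_vec)

lemma bapp_unit_vec_right:
  "j < n \<Longrightarrow> k < n \<Longrightarrow> bapp n \<mu> x (unit_vec n j) $ k = (\<Sum>a<n. x $ a * \<mu> a j k)"
  by (simp add: bapp_index sum_unit_vec_mult del: index_unit_vec)

lemma derivation_coordinates:
  assumes der: "is_derivation n \<mu> D" and ijk: "i < n" "j < n" "k < n"
  shows "comp_bilin n D \<mu> i j k = bilin_comp1 n \<mu> D i j k + bilin_comp2 n \<mu> D i j k"
proof -
  have D: "D \<in> carrier_mat n n"
    using der unfolding is_derivation_def by blast
  have "D *\<^sub>v bapp n \<mu> (unit_vec n i) (unit_vec n j)
      = bapp n \<mu> (D *\<^sub>v unit_vec n i) (unit_vec n j) + bapp n \<mu> (unit_vec n i) (D *\<^sub>v unit_vec n j)"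
    using der unfolding is_derivation_def by simp
  then have "(D *\<^sub>v bapp n \<mu> (unit_vec n i) (unit_vec n j)) $ k
      = bapp n \<mu> (D *\<^sub>v unit_vec n i) (unit_vec n j) $ k + bapp n \<mu> (unit_vec n i) (D *\<^sub>v unit_vec n j) $ k"
    using ijk by (simp add: bapp_def)
  then show ?thesis
    using D ijk
    by (simp add: bapp_unit_vecs bapp_unit_vec_left bapp_unit_vec_right mult_mat_vec_unit_vec_index
        del: index_mult_mat_vec)
      (simp add: comp_bilin_def bilin_comp1_def bilin_comp2_def scalar_prod_def lessThan_atLeast0)
qed

lemma Mmu_carrier: "Mmu n \<mu> \<in> carrier_mat n n"
  unfolding Mmu_def msum_def by auto

lemma Mmu_index:
  assumes "a < n" "b < n"
  shows "Mmu n \<mu> $$ (a,b) = 2 * (\<Sum>i<n. \<Sum>j<n. \<mu> i j a * cnj (\<mu> i j b))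
     - 2 * (\<Sum>i<n. \<Sum>j<n. cnj (\<mu> i a j) * \<mu> i b j)
     - 2 * (\<Sum>i<n. \<Sum>j<n. cnj (\<mu> a i j) * \<mu> b i j)"
  using assms unfolding Mmu_def msum_def Lmat_def Rmat_def adj_def
  by (simp add: scalar_prod_def lessThan_atLeast0)

lemma sum_lessThan_nested4:
  "(\<Sum>a<n. \<Sum>b<n. \<Sum>c<n. \<Sum>d<n. f a b c d)
     = (\<Sum>(a,b,c,d) \<in> {..<n} \<times> {..<n} \<times> {..<n} \<times> {..<n::nat}. (f a b c d :: 'a :: comm_monoid_add))"
  by (simp add: sum.cartesian_product split_def)

lemma tr_Mmu_mult:
  assumes D: "D \<in> carrier_mat n n"
  shows "tr (Mmu n \<mu> * D) = 2 * bilin_inner n \<mu> (comp_bilin n D \<mu>)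
    - 2 * bilin_inner n \<mu> (bilin_comp2 n \<mu> D) - 2 * bilin_inner n \<mu> (bilin_comp1 n \<mu> D)"
proof -
  have out: "(\<Sum>a<n. \<Sum>b<n. (\<Sum>i<n. \<Sum>j<n. \<mu> i j a * cnj (\<mu> i j b)) * D $$ (b,a))
      = bilin_inner n \<mu> (comp_bilin n D \<mu>)"
    unfolding bilin_inner_def comp_bilin_def sum_distrib_left sum_distrib_right sum_lessThan_nested4
    by (rule sum.reindex_bij_witness[where j = "\<lambda>(a,b,i,j). (i,j,b,a)" and i = "\<lambda>(i,j,k,l). (l,k,i,j)"])
      (auto simp: mult_ac)
  have snd: "(\<Sum>a<n. \<Sum>b<n. (\<Sum>i<n. \<Sum>j<n. cnj (\<mu> i a j) * \<mu> i b j) * D $$ (b,a))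
      = bilin_inner n \<mu> (bilin_comp2 n \<mu> D)"
    unfolding bilin_inner_def bilin_comp2_def sum_distrib_left sum_distrib_right sum_lessThan_nested4
    by (rule sum.reindex_bij_witness[where j = "\<lambda>(a,b,i,j). (i,a,j,b)" and i = "\<lambda>(i,j,k,l). (j,l,i,k)"])
      (auto simp: mult_ac)
  have fst: "(\<Sum>a<n. \<Sum>b<n. (\<Sum>i<n. \<Sum>j<n. cnj (\<mu> a i j) * \<mu> b i j) * D $$ (b,a))
      = bilin_inner n \<mu> (bilin_comp1 n \<mu> D)"
    unfolding bilin_inner_def bilin_comp1_def sum_distrib_left sum_distrib_right sum_lessThan_nested4
    by (rule sum.reindex_bij_witness[where j = "\<lambda>(a,b,i,j). (a,i,j,b)" and i = "\<lambda>(i,j,k,l). (i,l,j,k)"])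
      (auto simp: mult_ac)
  have "tr (Mmu n \<mu> * D) = (\<Sum>a<n. \<Sum>b<n. Mmu n \<mu> $$ (a,b) * D $$ (b,a))"
    by (rule tr_mult[OF Mmu_carrier D])
  also have "\<dots> = 2 * (\<Sum>a<n. \<Sum>b<n. (\<Sum>i<n. \<Sum>j<n. \<mu> i j a * cnj (\<mu> i j b)) * D $$ (b,a))
      - 2 * (\<Sum>a<n. \<Sum>b<n. (\<Sum>i<n. \<Sum>j<n. cnj (\<mu> i a j) * \<mu> i b j) * D $$ (b,a))
      - 2 * (\<Sum>a<n. \<Sum>b<n. (\<Sum>i<n. \<Sum>j<n. cnj (\<mu> a i j) * \<mu> b i j) * D $$ (b,a))"
    by (simp add: Mmu_index algebra_simps sum_subtractf sum_distrib_left)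
  finally show ?thesis
    unfolding out snd fst .
qed

lemma tr_Mmu_mult_derivation:
  assumes der: "is_derivation n \<mu> D"
  shows "tr (Mmu n \<mu> * D) = 0"
proof -
  have D: "D \<in> carrier_mat n n"
    using der unfolding is_derivation_def by blast
  have "bilin_inner n \<mu> (comp_bilin n D \<mu>)
      = bilin_inner n \<mu> (bilin_comp1 n \<mu> D) + bilin_inner n \<mu> (bilin_comp2 n \<mu> D)"
    unfolding bilin_inner_def by (simp add: derivation_coordinates[OF der] distrib_left sum.distrib)
  then show ?thesis
    unfolding tr_Mmu_mult[OF D] by simp
qed

lemma bilin_inner_self: "bilin_inner n \<mu> \<mu> = of_real (normsq n \<mu>)"
  unfolding bilin_inner_def normsq_def of_real_sum
  by (simp add: complex_norm_square mult.commute del: of_real_power)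

lemma tr_Mmu: "tr (Mmu n \<mu>) = - 2 * of_real (normsq n \<mu>)"
proof -
  have one: "comp_bilin n (1\<^sub>m n) \<mu> i j k = \<mu> i j k" "bilin_comp1 n \<mu> (1\<^sub>m n) k j l = \<mu> k j l"
    "bilin_comp2 n \<mu> (1\<^sub>m n) i k l = \<mu> i k l" if "k < n" for i j k l
    using that by (simp_all add: comp_bilin_def bilin_comp1_def bilin_comp2_def if_distrib if_distribR
        cong: if_cong)
  have "tr (Mmu n \<mu>) = tr (Mmu n \<mu> * 1\<^sub>m n)"
    using right_mult_one_mat[OF Mmu_carrier] by simp
  also have "\<dots> = 2 * bilin_inner n \<mu> \<mu> - 2 * bilin_inner n \<mu> \<mu> - 2 * bilin_inner n \<mu> \<mu>"
    unfolding tr_Mmu_mult[OF one_carrier_mat] by (simp add: bilin_inner_def one)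
  finally show ?thesis
    by (simp add: bilin_inner_self)
qed

lemma critical_trace_equations:
  assumes der: "is_derivation n \<mu> D" and M: "Mmu n \<mu> = of_real c \<cdot>\<^sub>m 1\<^sub>m n + D"
  shows "Fn n \<mu> = -2 * c / normsq n \<mu>"
    and "of_real c * of_nat n + tr D = - 2 * of_real (normsq n \<mu>)"
    and "of_real c * tr D + tr (D * D) = 0"
proof -
  have D: "D \<in> carrier_mat n n"
    using der unfolding is_derivation_def by blast
  have cI: "of_real c \<cdot>\<^sub>m 1\<^sub>m n \<in> carrier_mat n n"
    by simp
  have "tr (Mmu n \<mu>) = of_real c * of_nat n + tr D"
    unfolding M tr_add[OF cI D] tr_smult[OF one_carrier_mat] tr_one ..
  then show "of_real c * of_nat n + tr D = - 2 * of_real (normsq n \<mu>)"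
    by (simp add: tr_Mmu)
  have "Mmu n \<mu> * D = of_real c \<cdot>\<^sub>m D + D * D"
    unfolding M using D
    by (simp add: add_mult_distrib_mat[OF cI D D] mult_smult_assoc_mat[OF one_carrier_mat D])
  then have "tr (Mmu n \<mu> * D) = of_real c * tr D + tr (D * D)"
    using D by (simp add: tr_add[of _ n] tr_smult)
  then show "of_real c * tr D + tr (D * D) = 0"
    using tr_Mmu_mult_derivation[OF der] by simp
  have "Mmu n \<mu> * Mmu n \<mu> = of_real c \<cdot>\<^sub>m Mmu n \<mu> + Mmu n \<mu> * D"
    using D Mmu_carrier[of n \<mu>]
    by (subst (2) M)
      (simp add: mult_add_distrib_mat[OF Mmu_carrier cI D] mult_smult_distrib[OF Mmu_carrier one_carrier_mat])
  then have "tr (Mmu n \<mu> * Mmu n \<mu>) = of_real (-2 * c * normsq n \<mu>)"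
    using D Mmu_carrier[of n \<mu>]
    by (simp add: tr_add[of _ n] tr_smult tr_Mmu tr_Mmu_mult_derivation[OF der])
  then show "Fn n \<mu> = -2 * c / normsq n \<mu>"
    unfolding Fn_def by (simp add: power2_eq_square)
qed

lemma Fn_critical_zero_derivation:
  assumes "n \<ge> 1" "normsq n \<mu> \<noteq> 0" "Mmu n \<mu> = of_real c \<cdot>\<^sub>m 1\<^sub>m n + 0\<^sub>m n n"
  shows "Fn n \<mu> = 4 / real n"
proof -
  have der: "is_derivation n \<mu> (0\<^sub>m n n)"
    unfolding is_derivation_def by (auto simp: bapp_def)
  have "tr (0\<^sub>m n n) = 0"
    unfolding tr_def by simp
  then have "of_real (c * real n) = (of_real (-2 * normsq n \<mu>) :: complex)"
    using critical_trace_equations(2)[OF der assms(3)] by simp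
  then have cn: "c * real n = -2 * normsq n \<mu>"
    by (simp only: of_real_eq_iff)
  have "Fn n \<mu> = -2 * (c * real n) / (normsq n \<mu> * real n)"
    using critical_trace_equations(1)[OF der assms(3)] assms(1) by simp
  also have "\<dots> = 4 / real n"
    unfolding cn using assms(2) by simp
  finally show ?thesis .
qed

lemma weighted_square_sum_pos:
  assumes "length ks = length ds" "\<forall>d\<in>set ds. d > 0" "Gcd (set ks) = (1::int)"
  shows "(\<Sum>i<length ks. (of_int (ks ! i))\<^sup>2 * real (ds ! i)) > 0"
proof -
  have "\<not> set ks \<subseteq> {0}"
    using assms(3) by (auto dest: subset_singletonD)
  then obtain k where "k \<in> set ks" "k \<noteq> 0"
    by blast
  then obtain i where i: "i < length ks" "ks ! i \<noteq> 0"
    by (auto simp: in_set_conv_nth)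
  then have "(of_int (ks ! i))\<^sup>2 * real (ds ! i) > 0"
    using assms(1,2) by (simp add: nth_mem)
  then show ?thesis
    using i by (intro sum_pos2[of _ i]) auto
qed

text \<open>Here \<open>K1\<close>, \<open>K2\<close> stand for the traces of \<open>sD\<close> and \<open>(sD)\<^sup>2\<close>, where \<open>sD\<close> has the
  integer eigenvalues of the type.\<close>

lemma critical_value_from_traces:
  fixes c N s K1 K2 n :: real
  assumes "N \<noteq> 0" "s \<noteq> 0" "K2 \<noteq> 0"
    and trace: "c * n * s + K1 = -2 * N * s" and trace_square: "c * s * K1 + K2 = 0"
  shows "-2 * c / N = 4 / (n - K1\<^sup>2 / K2)"
proof -
  have K2: "K2 = - (c * s * K1)"
    using trace_square by simp
  with \<open>K2 \<noteq> 0\<close> have "c \<noteq> 0" "K1 \<noteq> 0"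
    by auto
  have "n - K1\<^sup>2 / K2 = (c * n * s + K1) / (c * s)"
    unfolding K2 using \<open>c \<noteq> 0\<close> \<open>K1 \<noteq> 0\<close> \<open>s \<noteq> 0\<close> by (simp add: field_simps power2_eq_square)
  also have "\<dots> = -2 * N / c"
    unfolding trace using \<open>s \<noteq> 0\<close> by simp
  finally show ?thesis
    using \<open>c \<noteq> 0\<close> \<open>N \<noteq> 0\<close> by simp
qed

lemma Fn_critical_nonzero_derivation:
  assumes der: "is_derivation n \<mu> D" and M: "Mmu n \<mu> = of_real c \<cdot>\<^sub>m 1\<^sub>m n + D"
    and N: "normsq n \<mu> \<noteq> 0" and s: "s > 0"
    and type: "eigen_data (of_real s \<cdot>\<^sub>m D) ks ds" "Gcd (set ks) = 1"
  shows "Fn n \<mu> = 4 / (real n - (\<Sum>i<length ks. of_int (ks ! i) * real (ds ! i))\<^sup>2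
                                 / (\<Sum>i<length ks. (of_int (ks ! i))\<^sup>2 * real (ds ! i)))"
proof -
  define K1 where "K1 = (\<Sum>i<length ks. of_int (ks ! i) * real (ds ! i))"
  define K2 where "K2 = (\<Sum>i<length ks. (of_int (ks ! i))\<^sup>2 * real (ds ! i))"
  have D: "D \<in> carrier_mat n n"
    using der unfolding is_derivation_def by blast
  have sD: "of_real s \<cdot>\<^sub>m D \<in> carrier_mat n n"
    using D by simp
  from type have "K2 > 0"
    unfolding K2_def eigen_data_def by (intro weighted_square_sum_pos) auto
  from type have cp:
      "char_poly (of_real s \<cdot>\<^sub>m D) = (\<Prod>i<length ks. [:- of_int (ks ! i), 1:] ^ (ds ! i))"
    unfolding eigen_data_def by blast
  note eigen_traces = tr_char_poly_factor_powers[OF sD cp]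
  have trD: "of_real s * tr D = of_real K1"
    using eigen_traces(1) tr_smult[OF D] unfolding K1_def by simp
  have "(of_real s \<cdot>\<^sub>m D) * (of_real s \<cdot>\<^sub>m D) = of_real s \<cdot>\<^sub>m (of_real s \<cdot>\<^sub>m (D * D))"
    using D by (simp add: mult_smult_assoc_mat[OF D sD] mult_smult_distrib[OF D D])
  then have trDD: "of_real s * (of_real s * tr (D * D)) = of_real K2"
    using eigen_traces(2) D unfolding K2_def by (simp add: tr_smult[of _ n])
  have "of_real (c * real n * s + K1) = of_real s * (of_real c * of_nat n + tr D)"
    using trD by (simp add: algebra_simps)
  also have "\<dots> = of_real (-2 * normsq n \<mu> * s)"
    unfolding critical_trace_equations(2)[OF der M] by simp
  finally have trace: "c * real n * s + K1 = -2 * normsq n \<mu> * s"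
    by (simp only: of_real_eq_iff)
  have "of_real (c * s * K1 + K2) = of_real s * of_real s * (of_real c * tr D + tr (D * D))"
    using trD trDD by (simp add: algebra_simps)
  then have trace_square: "c * s * K1 + K2 = 0"
    unfolding critical_trace_equations(3)[OF der M] by (simp only: of_real_eq_0_iff mult_zero_right)
  have "-2 * c / normsq n \<mu> = 4 / (real n - K1\<^sup>2 / K2)"
    using N s \<open>K2 > 0\<close> trace trace_square by (intro critical_value_from_traces) auto
  then show ?thesis
    unfolding critical_trace_equations(1)[OF der M] K1_def K2_def .
qed

theorem proposition4p4:
  fixes n :: nat and \<mu> :: bilin and ks :: "int list" and ds :: "nat list"
  assumes "n \<ge> 1"
    and "critical_pt n \<mu>"
    and "has_type n \<mu> ks ds"
  shows "(ks = [0] \<and> ds = [n] \<longrightarrow> Fn n \<mu> = 4 / real n)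
       \<and> (\<not> (ks = [0] \<and> ds = [n]) \<longrightarrow>
            Fn n \<mu> = 4 / (real n
              - (\<Sum>i<length ks. of_int (ks ! i) * real (ds ! i))\<^sup>2
                / (\<Sum>i<length ks. (of_int (ks ! i))\<^sup>2 * real (ds ! i))))"
proof -
  from assms(3) obtain c D where N: "normsq n \<mu> \<noteq> 0" and der: "is_derivation n \<mu> D"
    and M: "Mmu n \<mu> = of_real c \<cdot>\<^sub>m 1\<^sub>m n + D"
    and type: "if D = 0\<^sub>m n n then ks = [0] \<and> ds = [n]
         else \<exists>s::real. s > 0 \<and> eigen_data (of_real s \<cdot>\<^sub>m D) ks ds \<and> Gcd (set ks) = 1"
    unfolding has_type_def by blast
  show ?thesis
  proof (cases "D = 0\<^sub>m n n")
    case True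
    then show ?thesis
      using type Fn_critical_zero_derivation[OF assms(1) N] M by simp
  next
    case False
    with type obtain s where "s > 0" "eigen_data (of_real s \<cdot>\<^sub>m D) ks ds" "Gcd (set ks) = 1"
      by auto
    moreover from \<open>Gcd (set ks) = 1\<close> have "\<not> (ks = [0] \<and> ds = [n])"
      by auto
    ultimately show ?thesis
      using Fn_critical_nonzero_derivation[OF der M N] by blast
  qed
qed

end
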